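(* Assume $g$ satisfies (Hg), and let $k>0$, $(a,d)\in\mathcal H$. Then the following are equivalent: (i) $(a,d)\in\mathcal D^-(k)$; (ii) there exists $A\in(a,1)$ with $$\max_{v\in[0,A]}\big(d(k+1)v-dkA-g(v;a)\big)<0.$$
   Context: Let $\mathcal H=(0,1)\times(0,\infty)$. A function $g:\mathbb R\times[0,1]\to\mathbb R$, $(u,a)\mapsto g(u;a)$, satisfies (Hg) if it is $C^1$ and for every $a\in(0,1)$: $g(0;a)=g(a;a)=g(1;a)=0$, $g'(0;a)<0$, $g'(1;a)<0$, $g'(a;a)>0$ (where $g'=\partial_u g$), $g(v;a)>0$ for $v\in(-\infty,0)\cup(a,1)$ and $g(v;a)<0$ for $v\in(0,a)\cup(1,\infty)$. For $A\in(0,1)$ let $d^\diamond(A;a)=\inf\{d>0:\ d(k+1)(A-v)-g(A;a)\ge -g(v;a)\ \text{for all }v\in[0,A]\}$ and $$\mathcal D^-(k)=\Big\{(a,d)\in\mathcal H:\ d^\diamond(A;a)<d<\frac{g(A;a)}{A}\ \text{for some }A\in(a,1)\Big\}.$$ *)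

theory Defs
  imports "HOL-Analysis.Analysis"
begin

text \<open>g u a stands for g(u;a). C^1 on R x [0,1]: continuous partial derivatives gu, ga
  giving the (Frechet) derivative of (u,a) |-> g u a relative to R x [0,1].\<close>

definition C1_strip :: "(real \<Rightarrow> real \<Rightarrow> real) \<Rightarrow> bool" where
  "C1_strip g \<longleftrightarrow> (\<exists>gu ga :: real \<Rightarrow> real \<Rightarrow> real.
      continuous_on (UNIV \<times> {0..1}) (\<lambda>(u,a). gu u a) \<and>
      continuous_on (UNIV \<times> {0..1}) (\<lambda>(u,a). ga u a) \<and>
      (\<forall>u a. a \<in> {0..1} \<longrightarrow>
         ((\<lambda>(x,y). g x y) has_derivative (\<lambda>(h,l). gu u a * h + ga u a * l))
           (at (u,a) within UNIV \<times> {0..1})))"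

definition Hg :: "(real \<Rightarrow> real \<Rightarrow> real) \<Rightarrow> bool" where
  "Hg g \<longleftrightarrow> C1_strip g \<and>
    (\<forall>a. 0 < a \<and> a < 1 \<longrightarrow>
       g 0 a = 0 \<and> g a a = 0 \<and> g 1 a = 0 \<and>
       deriv (\<lambda>u. g u a) 0 < 0 \<and> deriv (\<lambda>u. g u a) 1 < 0 \<and> deriv (\<lambda>u. g u a) a > 0 \<and>
       (\<forall>v. (v < 0 \<or> (a < v \<and> v < 1)) \<longrightarrow> g v a > 0) \<and>
       (\<forall>v. ((0 < v \<and> v < a) \<or> 1 < v) \<longrightarrow> g v a < 0))"

definition d_diamond :: "real \<Rightarrow> (real \<Rightarrow> real \<Rightarrow> real) \<Rightarrow> real \<Rightarrow> real \<Rightarrow> real" where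
  "d_diamond k g A a = Inf {d. d > 0 \<and>
      (\<forall>v\<in>{0..A}. d * (k + 1) * (A - v) - g A a \<ge> - g v a)}"

definition D_minus :: "real \<Rightarrow> (real \<Rightarrow> real \<Rightarrow> real) \<Rightarrow> (real \<times> real) set" where
  "D_minus k g = {(a, d). 0 < a \<and> a < 1 \<and> 0 < d \<and>
      (\<exists>A\<in>{a<..<1}. d_diamond k g A a < d \<and> d < g A a / A)}"

end

theory Submission
  imports Defs
begin

text \<open>
  Write \<open>\<phi>\<^sub>A(v) = d(k+1)v - dkA - g(v;a) = d(k+1)(v - A) + dA - g(v;a)\<close>.
  If a slope \<open>d' < d\<close> is admissible in the infimum defining \<open>d\<^sup>\<diamond>(A)\<close> and
  \<open>dA < g(A;a)\<close>, then \<open>\<phi>\<^sub>A(v) \<le> dA - g(A;a) < 0\<close> on \<open>[0,A]\<close>.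
  Conversely, if \<open>\<phi>\<^sub>A \<le> -\<epsilon>\<close> on \<open>[0,A]\<close>, lower the slope slightly to \<open>d' = d - \<eta>\<close>:
  then \<open>h(v) = d'(k+1)v - g(v;a)\<close> stays below the level \<open>M = dkA - \<epsilon>\<close> on \<open>[0,A]\<close>
  but exceeds it at \<open>v = 1\<close>, where \<open>g(1;a) = 0\<close>. At the first point \<open>B \<ge> A\<close> where
  \<open>h\<close> reaches \<open>M\<close>, the slope \<open>d'\<close> is admissible for \<open>d\<^sup>\<diamond>(B)\<close>, and \<open>h(B) = M\<close>
  gives \<open>g(B;a) > dB\<close>.
  Admissible slopes exist at all because \<open>g(\<cdot>;a)\<close> is \<open>C\<^sup>1\<close>, hence Lipschitz, on \<open>[0,1]\<close>;
  otherwise \<open>d\<^sup>\<diamond>\<close> would be the infimum of the empty set, an unspecified real.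
\<close>

lemma C1_strip_partial_derivative:
  assumes "C1_strip g" and "a \<in> {0..1}"
  obtains g' where "\<And>u. ((\<lambda>u. g u a) has_real_derivative g' u) (at u)"
    and "continuous_on UNIV g'"
proof -
  obtain gu ga where cont_gu: "continuous_on (UNIV \<times> {0..1}) (\<lambda>(u,a). gu u a)"
    and der: "\<And>u a. a \<in> {0..1} \<Longrightarrow>
         ((\<lambda>(x,y). g x y) has_derivative (\<lambda>(h,l). gu u a * h + ga u a * l))
           (at (u,a) within UNIV \<times> {0..1})"
    using assms(1) unfolding C1_strip_def by blast
  have "((\<lambda>u. (\<lambda>(x,y). g x y) ((\<lambda>u. (u, a)) u)) has_derivative
        (\<lambda>h. (\<lambda>p. (\<lambda>(h,l). gu (fst p) (snd p) * h + ga (fst p) (snd p) * l))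
                ((\<lambda>u. (u, a)) u) ((\<lambda>h. (h, 0)) h))) (at u)" for u
  proof (rule has_derivative_in_compose2[where t="UNIV \<times> {0..1}"])
    show "((\<lambda>(x, y). g x y) has_derivative (\<lambda>(h, l). gu (fst p) (snd p) * h + ga (fst p) (snd p) * l))
          (at p within UNIV \<times> {0..1})" if "p \<in> UNIV \<times> {0..1}" for p
      using der[of "snd p" "fst p"] that by auto
    show "((\<lambda>u. (u, a)) has_derivative (\<lambda>h. (h, 0))) (at u)"
      by (auto intro!: derivative_eq_intros)
  qed (use assms(2) in auto)
  then have "((\<lambda>u. g u a) has_real_derivative gu u a) (at u)" for u
    by (simp add: has_field_derivative_def mult.commute[of _ "gu _ a"])
  moreover have "continuous_on UNIV ((\<lambda>(u,a). gu u a) \<circ> (\<lambda>u. (u, a)))"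
    using assms(2)
    by (intro continuous_on_compose) (auto intro!: continuous_intros continuous_on_subset[OF cont_gu])
  ultimately show thesis using that[of "\<lambda>u. gu u a"] by (simp add: o_def)
qed

lemma C1_strip_lipschitz_on:
  assumes "C1_strip g" and "a \<in> {0..1}"
  obtains L where "L-lipschitz_on {s..t} (\<lambda>u. g u a)"
proof -
  obtain g' where der: "\<And>u. ((\<lambda>u. g u a) has_real_derivative g' u) (at u)"
    and cont: "continuous_on UNIV g'"
    using C1_strip_partial_derivative[OF assms] by blast
  have "compact (g' ` {s..t})"
    by (rule compact_continuous_image) (auto intro: continuous_on_subset[OF cont])
  then obtain L where "L > 0" and L: "\<And>x. x \<in> {s..t} \<Longrightarrow> norm (g' x) \<le> L"
    by (metis compact_imp_bounded bounded_pos imageI)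
  have "L-lipschitz_on {s..t} (\<lambda>u. g u a)"
  proof (rule lipschitz_onI)
    fix x y assume "x \<in> {s..t}" "y \<in> {s..t}"
    then show "dist (g x a) (g y a) \<le> L * dist x y"
      using field_differentiable_bound[of "{s..t}" "\<lambda>u. g u a" g' L x y]
        has_field_derivative_at_within[OF der] L
      by (simp add: dist_norm)
  qed (use \<open>L > 0\<close> in simp)
  then show thesis by (rule that)
qed

definition diamond_slopes :: "real \<Rightarrow> (real \<Rightarrow> real \<Rightarrow> real) \<Rightarrow> real \<Rightarrow> real \<Rightarrow> real set" where
  "diamond_slopes k g A a = {d. d > 0 \<and> (\<forall>v\<in>{0..A}. d * (k + 1) * (A - v) - g A a \<ge> - g v a)}"

lemma d_diamond_eq_Inf: "d_diamond k g A a = Inf (diamond_slopes k g A a)"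
  by (simp add: d_diamond_def diamond_slopes_def)

lemma bdd_below_diamond_slopes: "bdd_below (diamond_slopes k g A a)"
  by (auto simp: diamond_slopes_def intro: bdd_belowI[of _ 0])

lemma diamond_slopes_nonempty:
  assumes "L-lipschitz_on {0..A} (\<lambda>u. g u a)" and "-1 < k"
  shows "diamond_slopes k g A a \<noteq> {}"
proof -
  have "0 \<le> L" using assms(1) by (rule lipschitz_on_nonneg)
  have "(L + 1) / (k + 1) \<in> diamond_slopes k g A a"
    unfolding diamond_slopes_def
  proof (intro CollectI conjI ballI)
    fix v assume v: "v \<in> {0..A}"
    have "g A a - g v a \<le> L * (A - v)"
      using lipschitz_onD[OF assms(1), of A v] v by (auto simp: dist_real_def)
    also have "\<dots> \<le> (L + 1) * (A - v)"
      using v by (intro mult_right_mono) auto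
    finally show "(L + 1) / (k + 1) * (k + 1) * (A - v) - g A a \<ge> - g v a"
      using assms(2) by simp
  qed (use \<open>0 \<le> L\<close> assms(2) in simp)
  then show ?thesis by blast
qed

lemma d_diamond_less_iff:
  assumes "diamond_slopes k g A a \<noteq> {}"
  shows "d_diamond k g A a < d \<longleftrightarrow> (\<exists>d'\<in>diamond_slopes k g A a. d' < d)"
  unfolding d_diamond_eq_Inf using assms bdd_below_diamond_slopes by (rule cInf_less_iff)

lemma diamond_slope_bound:
  assumes "d' \<in> diamond_slopes k g A a" and "d' \<le> d" and "-1 < k" and "v \<in> {0..A}"
  shows "d * (k + 1) * v - d * k * A - g v a \<le> d * A - g A a"
proof -
  have "- g v a \<le> d' * (k + 1) * (A - v) - g A a"
    using assms(1,4) unfolding diamond_slopes_def by auto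
  moreover have "d' * (k + 1) * (A - v) \<le> d * (k + 1) * (A - v)"
    using assms by (intro mult_right_mono) auto
  ultimately show ?thesis by (simp add: algebra_simps)
qed

lemma SUP_neg_iff_uniformly_neg:
  fixes f :: "'a::topological_space \<Rightarrow> real"
  assumes "compact S" and "S \<noteq> {}" and "continuous_on S f"
  shows "(SUP v\<in>S. f v) < 0 \<longleftrightarrow> (\<exists>\<epsilon>>0. \<forall>v\<in>S. f v \<le> - \<epsilon>)"
proof
  assume neg: "(SUP v\<in>S. f v) < 0"
  have "bdd_above (f ` S)"
    using assms by (metis compact_continuous_image compact_imp_bounded bounded_imp_bdd_above)
  then have "\<forall>v\<in>S. f v \<le> - (- (SUP v\<in>S. f v))"
    by (simp add: cSUP_upper)
  then show "\<exists>\<epsilon>>0. \<forall>v\<in>S. f v \<le> - \<epsilon>"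
    using neg by (intro exI[of _ "- (SUP v\<in>S. f v)"]) auto
next
  assume "\<exists>\<epsilon>>0. \<forall>v\<in>S. f v \<le> - \<epsilon>"
  then obtain \<epsilon> where "\<epsilon> > 0" "\<forall>v\<in>S. f v \<le> - \<epsilon>" by blast
  then have "(SUP v\<in>S. f v) \<le> - \<epsilon>"
    using assms(2) by (intro cSUP_least) auto
  with \<open>\<epsilon> > 0\<close> show "(SUP v\<in>S. f v) < 0" by linarith
qed

lemma first_crossing:
  fixes h :: "real \<Rightarrow> real"
  assumes "A \<le> b" and cont: "continuous_on {A..b} h" and "h A \<le> M" and "M < h b"
  obtains B where "A \<le> B" and "B < b" and "h B = M" and "\<And>v. v \<in> {A..B} \<Longrightarrow> h v \<le> M"
proof -
  define T where "T = {A..b} \<inter> h -` {M..}"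
  have "closed T"
    unfolding T_def using cont by (intro continuous_closed_preimage) auto
  moreover have "b \<in> T" "bdd_below T"
    using assms \<open>M < h b\<close> by (auto simp: T_def intro: bdd_belowI[of _ A])
  ultimately have BT: "Inf T \<in> T" and Bmin: "\<And>v. v \<in> T \<Longrightarrow> Inf T \<le> v"
    by (auto intro: closed_contains_Inf cInf_lower)
  define B where "B = Inf T"
  have "A \<le> B" "B \<le> b" "M \<le> h B" using BT by (auto simp: T_def B_def)
  have "h B = M"
  proof -
    obtain c where c: "A \<le> c" "c \<le> B" "h c = M"
      using IVT'[of h A M B] continuous_on_subset[OF cont, of "{A..B}"] assms(3)
        \<open>A \<le> B\<close> \<open>B \<le> b\<close> \<open>M \<le> h B\<close>
      by auto
    then have "c \<in> T" using \<open>B \<le> b\<close> by (auto simp: T_def)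
    then show ?thesis using Bmin c by (fastforce simp: B_def)
  qed
  moreover have "h v \<le> M" if "v \<in> {A..B}" for v
  proof (rule ccontr)
    assume "\<not> h v \<le> M"
    then have "v \<in> T" using that \<open>B \<le> b\<close> by (auto simp: T_def)
    then have "B \<le> v" using Bmin by (simp add: B_def)
    then show False using \<open>\<not> h v \<le> M\<close> \<open>h B = M\<close> that by auto
  qed
  moreover have "B < b" using \<open>B \<le> b\<close> \<open>h B = M\<close> \<open>M < h b\<close> by (auto simp: le_less)
  ultimately show thesis using that \<open>A \<le> B\<close> by blast
qed

lemma slope_gap_of_D_minus_witness:
  assumes "L-lipschitz_on {0..A} (\<lambda>u. g u a)" and "-1 < k" and "0 < A"
    and "d_diamond k g A a < d" and "d < g A a / A"
  shows "\<exists>\<epsilon>>0. \<forall>v\<in>{0..A}. d * (k + 1) * v - d * k * A - g v a \<le> - \<epsilon>"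
proof -
  have "diamond_slopes k g A a \<noteq> {}"
    using assms(1,2) by (rule diamond_slopes_nonempty)
  then obtain d' where "d' \<in> diamond_slopes k g A a" "d' < d"
    using d_diamond_less_iff assms(4) by blast
  then have "d * (k + 1) * v - d * k * A - g v a \<le> - (g A a - d * A)" if "v \<in> {0..A}" for v
    using diamond_slope_bound[of d' k g A a d v] that assms(2) by simp
  moreover have "0 < g A a - d * A" using assms(3,5) by (simp add: field_simps)
  ultimately show ?thesis by blast
qed

lemma diamond_slope_at_first_crossing:
  assumes cont: "continuous_on {0..1} (\<lambda>v. g v a)" and "g 1 a = 0"
    and "0 < d'" and "0 \<le> A" and "A < 1" and "M < d' * (k + 1)"
    and below: "\<And>v. v \<in> {0..A} \<Longrightarrow> d' * (k + 1) * v - g v a \<le> M"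
  obtains B where "A \<le> B" and "B < 1" and "g B a = d' * (k + 1) * B - M"
    and "d' \<in> diamond_slopes k g B a"
proof -
  define h where "h v = d' * (k + 1) * v - g v a" for v
  have "continuous_on {A..1} h"
    unfolding h_def using \<open>0 \<le> A\<close>
    by (intro continuous_intros continuous_on_subset[OF cont]) auto
  moreover have "h A \<le> M" "M < h 1"
    using below[of A] \<open>0 \<le> A\<close> \<open>M < d' * (k + 1)\<close> \<open>g 1 a = 0\<close> by (auto simp: h_def)
  ultimately obtain B where B: "A \<le> B" "B < 1" "h B = M"
    and crossing: "\<And>v. v \<in> {A..B} \<Longrightarrow> h v \<le> M"
    using first_crossing[of A 1 h M] \<open>A < 1\<close> by auto
  have "h v \<le> h B" if "v \<in> {0..B}" for v
    using below[of v] crossing[of v] that \<open>h B = M\<close> by (cases "v \<le> A") (auto simp: h_def)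
  then have "d' \<in> diamond_slopes k g B a"
    using \<open>0 < d'\<close> by (auto simp: diamond_slopes_def h_def algebra_simps)
  moreover have "g B a = d' * (k + 1) * B - M"
    using \<open>h B = M\<close> by (simp add: h_def)
  ultimately show thesis using that B by blast
qed

lemma D_minus_witness_of_slope_gap:
  assumes cont: "continuous_on {0..1} (\<lambda>v. g v a)" and "g 1 a = 0"
    and "0 \<le> k" and "0 < d" and "0 < A" and "A < 1" and "0 < \<epsilon>"
    and gap: "\<And>v. v \<in> {0..A} \<Longrightarrow> d * (k + 1) * v - d * k * A - g v a \<le> - \<epsilon>"
  obtains B where "A \<le> B" and "B < 1" and "d_diamond k g B a < d" and "d < g B a / B"
proof -
  define \<eta> where "\<eta> = min \<epsilon> d / (2 * (k + 1))"
  define d' where "d' = d - \<eta>"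
  define M where "M = d * k * A - \<epsilon>"
  have \<eta>k: "\<eta> * (k + 1) = min \<epsilon> d / 2"
    using \<open>0 \<le> k\<close> by (simp add: \<eta>_def field_simps)
  have "0 < \<eta>"
    using \<open>0 \<le> k\<close> \<open>0 < d\<close> \<open>0 < \<epsilon>\<close> by (simp add: \<eta>_def)
  then have "\<eta> \<le> \<eta> * (k + 1)"
    using \<open>0 \<le> k\<close> by (simp add: algebra_simps)
  then have "0 < d'" "d' < d"
    using \<eta>k \<open>0 < \<eta>\<close> \<open>0 < d\<close> by (auto simp: d'_def)
  have below: "d' * (k + 1) * v - g v a \<le> M" if "v \<in> {0..A}" for v
  proof -
    have "0 \<le> \<eta> * (k + 1) * v" using that \<open>0 < \<eta>\<close> \<open>0 \<le> k\<close> by auto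
    then show ?thesis using gap[OF that] by (simp add: M_def d'_def algebra_simps)
  qed
  have "M < d' * (k + 1)"
  proof -
    have "d * k * A \<le> d * k" using \<open>A < 1\<close> \<open>0 \<le> k\<close> \<open>0 < d\<close> by (simp add: mult_left_le)
    moreover have "d' * (k + 1) = d * k + d - \<eta> * (k + 1)"
      by (simp add: d'_def algebra_simps)
    ultimately show ?thesis
      unfolding M_def using \<eta>k min.cobounded2[of \<epsilon> d] \<open>0 < \<epsilon>\<close> \<open>0 < d\<close> by linarith
  qed
  then obtain B where B: "A \<le> B" "B < 1" and gB: "g B a = d' * (k + 1) * B - M"
    and "d' \<in> diamond_slopes k g B a"
    using diamond_slope_at_first_crossing[of g a d' A M k, OF cont \<open>g 1 a = 0\<close> \<open>0 < d'\<close>]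
      below \<open>0 < A\<close> \<open>A < 1\<close> by auto
  then have "d_diamond k g B a < d"
    unfolding d_diamond_eq_Inf using bdd_below_diamond_slopes \<open>d' < d\<close>
    by (meson cInf_lower le_less_trans)
  moreover have "d * B < g B a"
  proof -
    have "g B a = d * B + d * k * (B - A) + \<epsilon> - \<eta> * (k + 1) * B"
      using gB by (simp add: M_def d'_def algebra_simps)
    moreover have "\<eta> * (k + 1) * B \<le> \<eta> * (k + 1)"
      using B \<open>0 < \<eta>\<close> \<open>0 \<le> k\<close> by (simp add: mult_left_le)
    moreover have "0 \<le> d * k * (B - A)" using B \<open>0 < d\<close> \<open>0 \<le> k\<close> by simp
    ultimately show ?thesis using \<eta>k \<open>0 < \<epsilon>\<close> by linarith
  qed
  then have "d < g B a / B" using B \<open>0 < A\<close> by (simp add: field_simps)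
  ultimately show thesis using that B by blast
qed

theorem proposition5p2:
  fixes g :: "real \<Rightarrow> real \<Rightarrow> real" and k a d :: real
  assumes "Hg g" and "k > 0" and "0 < a" and "a < 1" and "0 < d"
  shows "(a, d) \<in> D_minus k g \<longleftrightarrow>
    (\<exists>A\<in>{a<..<1}. (SUP v\<in>{0..A}. d * (k + 1) * v - d * k * A - g v a) < 0)"
proof -
  have "C1_strip g" and "g 1 a = 0" using assms unfolding Hg_def by auto
  then obtain L where L: "L-lipschitz_on {0..1} (\<lambda>u. g u a)"
    using C1_strip_lipschitz_on[of g a] assms by auto
  have cont: "continuous_on {0..1} (\<lambda>u. g u a)"
    using L by (rule lipschitz_on_continuous_on)
  have sup_neg_iff: "(SUP v\<in>{0..A}. d * (k + 1) * v - d * k * A - g v a) < 0 \<longleftrightarrow>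
      (\<exists>\<epsilon>>0. \<forall>v\<in>{0..A}. d * (k + 1) * v - d * k * A - g v a \<le> - \<epsilon>)" if "A \<in> {a<..<1}" for A
    using that assms(3) continuous_on_subset[OF cont, of "{0..A}"]
    by (intro SUP_neg_iff_uniformly_neg) (auto intro!: continuous_intros)
  show ?thesis
  proof
    assume "(a, d) \<in> D_minus k g"
    then obtain A where A: "A \<in> {a<..<1}" "d_diamond k g A a < d" "d < g A a / A"
      unfolding D_minus_def by auto
    have "L-lipschitz_on {0..A} (\<lambda>u. g u a)"
      using lipschitz_on_subset[OF L, of "{0..A}"] A(1) by auto
    then have "\<exists>\<epsilon>>0. \<forall>v\<in>{0..A}. d * (k + 1) * v - d * k * A - g v a \<le> - \<epsilon>"
      by (rule slope_gap_of_D_minus_witness) (use A assms in auto)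
    with A sup_neg_iff show "\<exists>A\<in>{a<..<1}. (SUP v\<in>{0..A}. d * (k + 1) * v - d * k * A - g v a) < 0"
      by blast
  next
    assume "\<exists>A\<in>{a<..<1}. (SUP v\<in>{0..A}. d * (k + 1) * v - d * k * A - g v a) < 0"
    then obtain A \<epsilon> where A: "A \<in> {a<..<1}" and "0 < \<epsilon>"
      and gap: "\<forall>v\<in>{0..A}. d * (k + 1) * v - d * k * A - g v a \<le> - \<epsilon>"
      using sup_neg_iff by blast
    obtain B where "A \<le> B" "B < 1" "d_diamond k g B a < d" "d < g B a / B"
      by (rule D_minus_witness_of_slope_gap[of g a k d A \<epsilon>])
        (use cont \<open>g 1 a = 0\<close> \<open>0 < \<epsilon>\<close> gap A assms in auto)
    then show "(a, d) \<in> D_minus k g"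
      using A assms unfolding D_minus_def by auto
  qed
qed

end
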